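(* Let $\mathcal{L}$ be a base in a set $X$. Then for every $\alpha<\omega_1$, $\mathcal{L}(T_\alpha)=D_\alpha(\mathcal{L})$, where a set $A\subseteq X$ is identified with the $2$-partition $X\to 2$ given by its characteristic function.
   Context: A base in $X$ is a collection $\mathcal{L}$ of subsets of $X$ closed under finite intersections and countable unions (including the empty intersection $X$ and the empty union $\emptyset$). An ordinal $\alpha=\lambda+n$ ($\lambda$ zero or limit, $n<\omega$) is even if $n$ is even and odd otherwise; $r(\alpha)=0$ if even, $1$ otherwise. $D_\alpha(\{A_\beta\}_{\beta<\alpha})=\bigcup\{A_\beta\setminus\bigcup_{\gamma<\beta}A_\gamma\mid\beta<\alpha,\ r(\beta)\neq r(\alpha)\}$, and $D_\alpha(\mathcal{L})$ is the set of all such sets with all $A_\beta\in\mathcal{L}$. A (countable) forest is a countable poset without infinite chains in which every upper cone $\{y\mid x\leq y\}$ is a chain; a tree is a forest with a greatest element (root). A $k$-forest is a forest $(P;\leq)$ with a labeling $c:P\to k=\{0,\dots,k-1\}$. For a $k$-forest $F$ and $i<k$, $p_i(F)$ is the $k$-tree obtained by adding a new greatest element labeled $i$; $F_0\sqcup F_1\sqcup\cdots$ is the disjoint union; for a $2$-forest $F$, $\overline{F}$ is obtained by replacing every label $l$ by $1-l$. The $2$-trees $T_\alpha$, $\alpha<\omega_1$: $T_0$ is a single node labeled $0$; $T_{\alpha+1}=p_0(\overline{T}_\alpha)$; for limit $\lambda$, $T_\lambda=p_0(\overline{T}_{\alpha_0}\sqcup\overline{T}_{\alpha_1}\sqcup\cdots)$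 for some (any) sequence $\alpha_0<\alpha_1<\cdots$ of odd ordinals with supremum $\lambda$. For a $k$-forest $(P;\leq,c)$, $\mathcal{L}(P)$ is the set of $k$-partitions $A:X\to k$ such that there are sets $B_p\in\mathcal{L}$ ($p\in P$) with $\bigcup_{p\in P}B_p=X$ and $A^{-1}(i)=\bigcup\{\tilde{B}_p\mid p\in P,\ c(p)=i\}$ for each $i<k$, where $\tilde{B}_p=B_p\setminus\bigcup_{q<p}B_q$. *)

theory Defs
  imports Main "HOL-Library.FuncSet" "HOL-Library.Countable_Set"
begin

definition is_base :: "'x set \<Rightarrow> 'x set set \<Rightarrow> bool" where
  "is_base X L \<longleftrightarrow> L \<subseteq> Pow X \<and> X \<in> L \<and>
     (\<forall>A\<in>L. \<forall>B\<in>L. A \<inter> B \<in> L) \<and>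
     (\<forall>C. C \<subseteq> L \<longrightarrow> countable C \<longrightarrow> \<Union>C \<in> L)"

section \<open>Countable ordinals, represented by elements of a countable well-order\<close>

text \<open>An element x of the field of a well-order r represents the ordinal
  given by the order type of its strict initial segment.\<close>

definition wlt :: "('a \<times> 'a) set \<Rightarrow> 'a \<Rightarrow> 'a \<Rightarrow> bool" where
  "wlt r y x \<longleftrightarrow> (y, x) \<in> r \<and> y \<noteq> x"

text \<open>If x represents lambda + n (lambda zero or limit), the set below has exactly n elements.\<close>
definition fin_part :: "('a \<times> 'a) set \<Rightarrow> 'a \<Rightarrow> nat" where
  "fin_part r x = card {y. wlt r y x \<and> finite {z. (y, z) \<in> r \<and> (z, x) \<in> r}}"

definition is_odd_el :: "('a \<times> 'a) set \<Rightarrow> 'a \<Rightarrow> bool" where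
  "is_odd_el r x \<longleftrightarrow> odd (fin_part r x)"

definition rpar :: "('a \<times> 'a) set \<Rightarrow> 'a \<Rightarrow> nat" where
  "rpar r x = (if is_odd_el r x then 1 else 0)"

definition is_zero_el :: "('a \<times> 'a) set \<Rightarrow> 'a \<Rightarrow> bool" where
  "is_zero_el r x \<longleftrightarrow> \<not> (\<exists>y. wlt r y x)"

definition immpred :: "('a \<times> 'a) set \<Rightarrow> 'a \<Rightarrow> 'a \<Rightarrow> bool" where
  "immpred r y x \<longleftrightarrow> wlt r y x \<and> \<not> (\<exists>z. wlt r y z \<and> wlt r z x)"

definition is_limit_el :: "('a \<times> 'a) set \<Rightarrow> 'a \<Rightarrow> bool" where
  "is_limit_el r x \<longleftrightarrow> (\<exists>y. wlt r y x) \<and> \<not> (\<exists>y. immpred r y x)"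

definition Dclass :: "'x set set \<Rightarrow> ('a \<times> 'a) set \<Rightarrow> 'a \<Rightarrow> 'x set set" where
  "Dclass L r x0 =
     { (\<Union>b \<in> {b. wlt r b x0 \<and> rpar r b \<noteq> rpar r x0}. A b - (\<Union>g \<in> {g. wlt r g b}. A g))
       | A. \<forall>b. wlt r b x0 \<longrightarrow> A b \<in> L }"

text \<open>A k-forest is given by a node set P, its partial order le and a labelling c.
  L(P) is the set of k-partitions A : X -> k (functions in X ->E {..<k}).\<close>

definition Lforest :: "nat \<Rightarrow> 'x set \<Rightarrow> 'x set set \<Rightarrow> 'n set \<Rightarrow> ('n \<Rightarrow> 'n \<Rightarrow> bool)
    \<Rightarrow> ('n \<Rightarrow> nat) \<Rightarrow> ('x \<Rightarrow> nat) set" where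
  "Lforest k X L P le c =
     {A \<in> X \<rightarrow>\<^sub>E {..<k}. \<exists>B. (\<forall>p\<in>P. B p \<in> L) \<and> (\<Union>p\<in>P. B p) = X \<and>
        (\<forall>i<k. {x\<in>X. A x = i} =
           (\<Union>p\<in>{p\<in>P. c p = i}. B p - (\<Union>q\<in>{q\<in>P. le q p \<and> q \<noteq> p}. B q)))}"

section \<open>Concrete labelled trees: nodes are nat lists (paths from the root [])\<close>

type_synonym ltree = "nat list set \<times> (nat list \<Rightarrow> nat)"

text \<open>Tree order: p \<le> q iff q is a prefix of p (the root [] is the greatest element).\<close>
definition tle :: "nat list \<Rightarrow> nat list \<Rightarrow> bool" where
  "tle p q \<longleftrightarrow> (\<exists>s. p = q @ s)"

definition treq :: "ltree \<Rightarrow> ltree \<Rightarrow> bool" where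
  "treq T S \<longleftrightarrow> fst T = fst S \<and> (\<forall>p\<in>fst T. snd T p = snd S p)"

definition single0 :: ltree where
  "single0 = ({[]}, \<lambda>_. 0)"

definition flip :: "ltree \<Rightarrow> ltree" where
  "flip T = (fst T, \<lambda>p. 1 - snd T p)"

definition p0_one :: "ltree \<Rightarrow> ltree" where
  "p0_one T = ({[]} \<union> {0 # p | p. p \<in> fst T},
               \<lambda>q. case q of [] \<Rightarrow> 0 | i # p \<Rightarrow> snd T p)"

text \<open>p_0 applied to the disjoint union of countably many trees Ts 0, Ts 1, ...\<close>
definition p0_seq :: "(nat \<Rightarrow> ltree) \<Rightarrow> ltree" where
  "p0_seq Ts = ({[]} \<union> {i # p | i p. p \<in> fst (Ts i)},
               \<lambda>q. case q of [] \<Rightarrow> 0 | i # p \<Rightarrow> snd (Ts i) p)"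

text \<open>t assigns to every element x of the field of r (i.e. every ordinal below the order
  type of r) a tree T_x satisfying the recursive definition of T_alpha, for an arbitrary
  choice of cofinal sequences of odd ordinals at limits.\<close>
definition Tfam :: "('a \<times> 'a) set \<Rightarrow> ('a \<Rightarrow> ltree) \<Rightarrow> bool" where
  "Tfam r t \<longleftrightarrow> (\<forall>x\<in>Field r.
     (is_zero_el r x \<longrightarrow> treq (t x) single0) \<and>
     (\<forall>y. immpred r y x \<longrightarrow> treq (t x) (p0_one (flip (t y)))) \<and>
     (is_limit_el r x \<longrightarrow> (\<exists>f :: nat \<Rightarrow> 'a.
         (\<forall>i. wlt r (f i) x \<and> is_odd_el r (f i) \<and> wlt r (f i) (f (Suc i))) \<and>
         (\<forall>y. wlt r y x \<longrightarrow> (\<exists>i. wlt r y (f i))) \<and>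
         treq (t x) (p0_seq (\<lambda>i. flip (t (f i)))))))"

end

theory Submission
  imports Defs
begin

lemma well_order_on_props:
  assumes "Well_order r"
  shows "refl_on (Field r) r" "trans r" "antisym r" "total_on (Field r) r"
  using assms unfolding well_order_on_def linear_order_on_def partial_order_on_def preorder_on_def
  by auto

lemma well_order_refl: "Well_order r \<Longrightarrow> x \<in> Field r \<Longrightarrow> (x, x) \<in> r"
  using well_order_on_props(1) by (metis refl_onD)

lemma well_order_trans: "Well_order r \<Longrightarrow> (x, y) \<in> r \<Longrightarrow> (y, z) \<in> r \<Longrightarrow> (x, z) \<in> r"
  using well_order_on_props(2) by (metis transD)

lemma well_order_antisym: "Well_order r \<Longrightarrow> (x, y) \<in> r \<Longrightarrow> (y, x) \<in> r \<Longrightarrow> x = y"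
  using well_order_on_props(3) by (metis antisymD)

lemma well_order_total:
  "Well_order r \<Longrightarrow> x \<in> Field r \<Longrightarrow> y \<in> Field r \<Longrightarrow> (x, y) \<in> r \<or> (y, x) \<in> r"
  using well_order_on_props(4) well_order_refl unfolding total_on_def by metis

lemma well_order_has_least:
  assumes "Well_order r" "S \<subseteq> Field r" "S \<noteq> {}"
  shows "\<exists>a\<in>S. \<forall>a'\<in>S. (a, a') \<in> r"
  using assms by (metis Linear_order_wf_diff_Id well_order_on_def)

lemma wlt_Field: "wlt r y x \<Longrightarrow> y \<in> Field r \<and> x \<in> Field r"
  unfolding wlt_def by (auto simp: Field_def)

lemma FieldI1: "(y, x) \<in> r \<Longrightarrow> y \<in> Field r"
  by (auto simp: Field_def)

lemma wlt_le_trans: "Well_order r \<Longrightarrow> wlt r x y \<Longrightarrow> (y, z) \<in> r \<Longrightarrow> wlt r x z"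
  unfolding wlt_def using well_order_trans well_order_antisym by metis

lemma le_wlt_trans: "Well_order r \<Longrightarrow> (x, y) \<in> r \<Longrightarrow> wlt r y z \<Longrightarrow> wlt r x z"
  unfolding wlt_def using well_order_trans well_order_antisym by metis

lemma wlt_trichotomy:
  "Well_order r \<Longrightarrow> x \<in> Field r \<Longrightarrow> y \<in> Field r \<Longrightarrow> wlt r x y \<or> x = y \<or> wlt r y x"
  unfolding wlt_def using well_order_total by metis

lemma wlt_imp_not_le: "Well_order r \<Longrightarrow> wlt r x y \<Longrightarrow> (y, x) \<notin> r"
  unfolding wlt_def using well_order_antisym by metis

lemma well_order_finite_has_greatest:
  assumes wo: "Well_order r"
  shows "finite I \<Longrightarrow> I \<subseteq> Field r \<Longrightarrow> I \<noteq> {} \<Longrightarrow> \<exists>m\<in>I. \<forall>w\<in>I. (w, m) \<in> r"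
proof (induction I rule: finite_induct)
  case (insert a I)
  show ?case
  proof (cases "I = {}")
    case True
    then show ?thesis using insert well_order_refl[OF wo] by auto
  next
    case False
    then obtain m where m: "m \<in> I" "\<forall>w\<in>I. (w, m) \<in> r" using insert by auto
    have "a \<in> Field r" "m \<in> Field r" using insert m by auto
    then have "(a, m) \<in> r \<or> (m, a) \<in> r" by (rule well_order_total[OF wo])
    then show ?thesis using m insert well_order_trans[OF wo] well_order_refl[OF wo] by blast
  qed
qed simp

lemma immpred_le_iff:
  assumes wo: "Well_order r" and ip: "immpred r y x"
  shows "(b, x) \<in> r \<longleftrightarrow> b = x \<or> (b, y) \<in> r"
proof -
  have yx: "wlt r y x" and gap: "\<not> (\<exists>z. wlt r y z \<and> wlt r z x)"
    using ip unfolding immpred_def by auto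
  have "b = x \<or> (b, y) \<in> r" if "wlt r b x"
    using that wlt_trichotomy[OF wo] wlt_Field[OF yx] wlt_Field[OF that] gap
      well_order_refl[OF wo] unfolding wlt_def by metis
  moreover have "(b, x) \<in> r" if "b = x \<or> (b, y) \<in> r"
    using that yx well_order_trans[OF wo] well_order_refl[OF wo] wlt_Field[OF yx]
    unfolding wlt_def by blast
  ultimately show ?thesis unfolding wlt_def by blast
qed

lemma immpred_wlt_iff:
  assumes wo: "Well_order r" and ip: "immpred r y x"
  shows "wlt r b x \<longleftrightarrow> (b, y) \<in> r"
proof -
  have "wlt r y x" using ip unfolding immpred_def by auto
  then have "(b, y) \<in> r \<Longrightarrow> b \<noteq> x" using wlt_imp_not_le[OF wo] by blast
  then show ?thesis using immpred_le_iff[OF wo ip, of b] unfolding wlt_def by blast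
qed

definition finite_gap_preds :: "('a \<times> 'a) set \<Rightarrow> 'a \<Rightarrow> 'a set" where
  "finite_gap_preds r x = {y. wlt r y x \<and> finite {z. (y, z) \<in> r \<and> (z, x) \<in> r}}"

lemma fin_part_eq_card: "fin_part r x = card (finite_gap_preds r x)"
  unfolding fin_part_def finite_gap_preds_def by simp

lemma finite_finite_gap_preds:
  assumes wo: "Well_order r"
  shows "finite (finite_gap_preds r x)"
proof (cases "finite_gap_preds r x = {}")
  case False
  have "finite_gap_preds r x \<subseteq> Field r"
    unfolding finite_gap_preds_def by (auto dest: wlt_Field)
  then obtain z0 where z0: "z0 \<in> finite_gap_preds r x" "\<forall>z\<in>finite_gap_preds r x. (z0, z) \<in> r"
    using well_order_has_least[OF wo _ False] by blast
  have "finite_gap_preds r x \<subseteq> {z. (z0, z) \<in> r \<and> (z, x) \<in> r}"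
    using z0(2) unfolding finite_gap_preds_def wlt_def by blast
  then show ?thesis
    using z0(1) finite_subset unfolding finite_gap_preds_def by blast
qed simp

lemma finite_gap_preds_immpred:
  assumes wo: "Well_order r" and ip: "immpred r y x"
  shows "finite_gap_preds r x = insert y (finite_gap_preds r y)"
proof -
  have le_x: "(w, x) \<in> r \<longleftrightarrow> w = x \<or> (w, y) \<in> r" for w
    by (rule immpred_le_iff[OF wo ip])
  have "z \<in> finite_gap_preds r x \<longleftrightarrow> z = y \<or> z \<in> finite_gap_preds r y" for z
  proof (cases "(z, y) \<in> r")
    case True
    have "{w. (y, w) \<in> r \<and> (w, y) \<in> r} \<subseteq> {y}" using well_order_antisym[OF wo] by blast
    then have fin_y: "finite {w. (y, w) \<in> r \<and> (w, y) \<in> r}" by (rule finite_subset) simp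
    have "(z, x) \<in> r" "(x, x) \<in> r" using True le_x by blast+
    then have "{w. (z, w) \<in> r \<and> (w, x) \<in> r} = insert x {w. (z, w) \<in> r \<and> (w, y) \<in> r}"
      using le_x by blast
    moreover have "wlt r z x" using True immpred_wlt_iff[OF wo ip] by blast
    ultimately have "z \<in> finite_gap_preds r x \<longleftrightarrow> finite {w. (z, w) \<in> r \<and> (w, y) \<in> r}"
      unfolding finite_gap_preds_def by simp
    moreover have "z = y \<or> z \<in> finite_gap_preds r y \<longleftrightarrow> finite {w. (z, w) \<in> r \<and> (w, y) \<in> r}"
      using True fin_y unfolding finite_gap_preds_def wlt_def by auto
    ultimately show ?thesis by blast
  next
    case False
    have "wlt r y x" using ip unfolding immpred_def by blast
    then have "(y, y) \<in> r" using wlt_Field well_order_refl[OF wo] by metis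
    then have "z \<noteq> y" using False by blast
    moreover have "\<not> wlt r z y" using False unfolding wlt_def by blast
    moreover have "\<not> wlt r z x" using False immpred_wlt_iff[OF wo ip] by blast
    ultimately show ?thesis unfolding finite_gap_preds_def by simp
  qed
  then show ?thesis by blast
qed

lemma rpar_immpred:
  assumes wo: "Well_order r" and ip: "immpred r y x"
  shows "rpar r x \<noteq> rpar r y"
proof -
  have "y \<notin> finite_gap_preds r y" unfolding finite_gap_preds_def wlt_def by simp
  then have "fin_part r x = Suc (fin_part r y)"
    using finite_gap_preds_immpred[OF wo ip] finite_finite_gap_preds[OF wo]
    unfolding fin_part_eq_card by simp
  then show ?thesis unfolding rpar_def is_odd_el_def by auto
qed

lemma rpar_limit:
  assumes wo: "Well_order r" and lim: "is_limit_el r x"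
  shows "rpar r x = 0"
proof -
  have "finite_gap_preds r x = {}"
  proof (rule ccontr)
    assume "finite_gap_preds r x \<noteq> {}"
    then obtain z where zx: "wlt r z x" and fin: "finite {w. (z, w) \<in> r \<and> (w, x) \<in> r}"
      unfolding finite_gap_preds_def by auto
    let ?I = "{w. (z, w) \<in> r \<and> wlt r w x}"
    have "finite ?I" using fin by (rule finite_subset[rotated]) (auto simp: wlt_def)
    moreover have "?I \<subseteq> Field r" by (auto simp: Field_def)
    moreover have "z \<in> ?I" using zx well_order_refl[OF wo] wlt_Field[OF zx] by blast
    ultimately obtain m where m: "m \<in> ?I" "\<forall>w\<in>?I. (w, m) \<in> r"
      using well_order_finite_has_greatest[OF wo] by blast
    then obtain v where v: "wlt r m v" "wlt r v x"
      using lim unfolding is_limit_el_def immpred_def by auto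
    then have "v \<in> ?I" using m well_order_trans[OF wo] unfolding wlt_def by blast
    then show False using m(2) v(1) wlt_imp_not_le[OF wo] by blast
  qed
  then show ?thesis unfolding rpar_def is_odd_el_def fin_part_eq_card by simp
qed

lemma rpar_cases: "rpar r x = 0 \<or> rpar r x = 1"
  unfolding rpar_def by simp

lemma is_base_countable_UN:
  assumes "is_base X L" "countable I" "\<And>i. i \<in> I \<Longrightarrow> F i \<in> L"
  shows "(\<Union>i \<in> I. F i) \<in> L"
proof -
  have "F ` I \<subseteq> L" "countable (F ` I)" using assms(2,3) by auto
  then show ?thesis using assms(1) unfolding is_base_def by blast
qed

definition flip_pairs :: "('x set \<times> 'x set) set \<Rightarrow> ('x set \<times> 'x set) set" where
  "flip_pairs G = {(S, U). S \<subseteq> U \<and> (U - S, U) \<in> G}"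

definition p0_one_pairs :: "'x set set \<Rightarrow> ('x set \<times> 'x set) set \<Rightarrow> ('x set \<times> 'x set) set" where
  "p0_one_pairs L G = {(S, B0 \<union> U) | S U B0. B0 \<in> L \<and> (S, U) \<in> G}"

lemma p0_one_pairsI: "B0 \<in> L \<Longrightarrow> (S, U) \<in> G \<Longrightarrow> (S, B0 \<union> U) \<in> p0_one_pairs L G"
  unfolding p0_one_pairs_def by blast

definition p0_seq_pairs ::
    "'x set set \<Rightarrow> (nat \<Rightarrow> ('x set \<times> 'x set) set) \<Rightarrow> ('x set \<times> 'x set) set" where
  "p0_seq_pairs L Gs = {((\<Union>i. SS i), B0 \<union> (\<Union>i. UU i)) | SS UU B0.
     B0 \<in> L \<and> (\<forall>i. (SS i, UU i) \<in> Gs i) \<and> (\<forall>i j. SS i \<inter> UU j \<subseteq> SS j)}"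

lemma p0_seq_pairsI:
  "B0 \<in> L \<Longrightarrow> (\<And>i. (SS i, UU i) \<in> Gs i) \<Longrightarrow> (\<And>i j. SS i \<inter> UU j \<subseteq> SS j)
    \<Longrightarrow> ((\<Union>i. SS i), B0 \<union> (\<Union>i. UU i)) \<in> p0_seq_pairs L Gs"
  unfolding p0_seq_pairs_def by blast

definition hausdorff_diff :: "('a \<times> 'a) set \<Rightarrow> ('a \<Rightarrow> 'x set) \<Rightarrow> 'a \<Rightarrow> 'x set" where
  "hausdorff_diff r A c =
     (\<Union>b \<in> {b. wlt r b c \<and> rpar r b \<noteq> rpar r c}. A b - (\<Union>g \<in> {g. wlt r g b}. A g))"

definition diff_pairs :: "'x set set \<Rightarrow> ('a \<times> 'a) set \<Rightarrow> 'a \<Rightarrow> ('x set \<times> 'x set) set" where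
  "diff_pairs L r c = {(hausdorff_diff r A c, \<Union>b \<in> {b. (b, c) \<in> r}. A b) | A.
     \<forall>b. (b, c) \<in> r \<longrightarrow> A b \<in> L}"

lemma diff_pairsI:
  "(\<And>b. (b, c) \<in> r \<Longrightarrow> A b \<in> L)
    \<Longrightarrow> (hausdorff_diff r A c, \<Union>b \<in> {b. (b, c) \<in> r}. A b) \<in> diff_pairs L r c"
  unfolding diff_pairs_def by blast

lemma mem_diff_pairs_iff:
  "(S, U) \<in> diff_pairs L r c \<longleftrightarrow> (\<exists>A. (\<forall>b. (b, c) \<in> r \<longrightarrow> A b \<in> L)
     \<and> S = hausdorff_diff r A c \<and> U = (\<Union>b \<in> {b. (b, c) \<in> r}. A b))"
  unfolding diff_pairs_def by auto

definition first_entry :: "('a \<times> 'a) set \<Rightarrow> ('a \<Rightarrow> 'x set) \<Rightarrow> 'x \<Rightarrow> 'a \<Rightarrow> bool" where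
  "first_entry r A p b \<longleftrightarrow> p \<in> A b \<and> (\<forall>g. wlt r g b \<longrightarrow> p \<notin> A g)"

lemma first_entry_exists:
  assumes wo: "Well_order r" and "(b, c) \<in> r" "p \<in> A b"
  shows "\<exists>b0. (b0, c) \<in> r \<and> first_entry r A p b0"
proof -
  let ?E = "{b. (b, c) \<in> r \<and> p \<in> A b}"
  have "?E \<subseteq> Field r" "?E \<noteq> {}" using assms by (auto simp: Field_def)
  then obtain b0 where b0: "b0 \<in> ?E" "\<forall>b\<in>?E. (b0, b) \<in> r"
    using well_order_has_least[OF wo] by meson
  have "p \<notin> A g" if "wlt r g b0" for g
  proof
    assume "p \<in> A g"
    moreover have "(g, c) \<in> r"
      using that b0(1) well_order_trans[OF wo] unfolding wlt_def by blast
    ultimately show False using b0(2) wlt_imp_not_le[OF wo that] by blast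
  qed
  then show ?thesis using b0(1) unfolding first_entry_def by blast
qed

lemma first_entry_le:
  assumes wo: "Well_order r" and b0: "first_entry r A p b0" "b0 \<in> Field r"
    and b: "p \<in> A b" "(b, c) \<in> r"
  shows "(b0, c) \<in> r"
proof -
  have "wlt r b0 b \<or> b0 = b \<or> wlt r b b0"
    using wlt_trichotomy[OF wo b0(2) FieldI1[OF b(2)]] .
  then have "(b0, b) \<in> r"
    using b0 b(1) well_order_refl[OF wo b0(2)] unfolding first_entry_def wlt_def by blast
  then show ?thesis using b(2) well_order_trans[OF wo] by blast
qed

lemma first_entry_mono:
  assumes "first_entry r A p b0" "p \<in> B b0" "\<And>g. wlt r g b0 \<Longrightarrow> B g \<subseteq> A g"
  shows "first_entry r B p b0"
  using assms unfolding first_entry_def by blast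

lemma mem_hausdorff_diff_iff:
  assumes wo: "Well_order r" and b0: "(b0, c) \<in> r" "first_entry r A p b0"
  shows "p \<in> hausdorff_diff r A c \<longleftrightarrow> wlt r b0 c \<and> rpar r b0 \<noteq> rpar r c"
proof
  assume "p \<in> hausdorff_diff r A c"
  then obtain b where b: "wlt r b c" "rpar r b \<noteq> rpar r c" "first_entry r A p b"
    unfolding hausdorff_diff_def first_entry_def by blast
  have "wlt r b b0 \<or> b = b0 \<or> wlt r b0 b"
    using wlt_trichotomy[OF wo] wlt_Field[OF b(1)] FieldI1[OF b0(1)] by blast
  then have "b = b0" using b(3) b0(2) unfolding first_entry_def by blast
  then show "wlt r b0 c \<and> rpar r b0 \<noteq> rpar r c" using b by simp
next
  assume "wlt r b0 c \<and> rpar r b0 \<noteq> rpar r c"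
  then show "p \<in> hausdorff_diff r A c"
    using b0(2) unfolding hausdorff_diff_def first_entry_def by blast
qed

lemma hausdorff_diff_subset: "hausdorff_diff r A c \<subseteq> (\<Union>b \<in> {b. wlt r b c}. A b)"
  unfolding hausdorff_diff_def by blast

lemma hausdorff_diff_cong:
  assumes wo: "Well_order r" and eq: "\<And>b. wlt r b c \<Longrightarrow> A b = A' b"
  shows "hausdorff_diff r A c = hausdorff_diff r A' c"
proof -
  have "A g = A' g" if "wlt r b c" "wlt r g b" for b g
    using eq wlt_le_trans[OF wo that(2)] that(1) unfolding wlt_def by blast
  then show ?thesis unfolding hausdorff_diff_def using eq by (intro SUP_cong refl) auto
qed

lemma mem_below_diff_odd_iff:
  assumes wo: "Well_order r" and c: "rpar r c = 1" and b0: "(b0, c) \<in> r" "first_entry r A p b0"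
  shows "p \<in> (\<Union>b \<in> {b. (b, c) \<in> r}. A b) - hausdorff_diff r A c \<longleftrightarrow> rpar r b0 = 1"
proof -
  have "p \<in> (\<Union>b \<in> {b. (b, c) \<in> r}. A b)" using b0 unfolding first_entry_def by blast
  moreover have "b0 = c \<or> wlt r b0 c" using b0(1) unfolding wlt_def by blast
  ultimately show ?thesis
    using mem_hausdorff_diff_iff[OF wo b0] c rpar_cases[of r b0] by auto
qed

lemma hausdorff_diff_immpred:
  assumes wo: "Well_order r" and ip: "immpred r y x"
  shows "hausdorff_diff r A x = (\<Union>b \<in> {b. (b, y) \<in> r}. A b) - hausdorff_diff r A y"
proof -
  have below_x: "wlt r b x \<longleftrightarrow> (b, y) \<in> r" for b by (rule immpred_wlt_iff[OF wo ip])
  have "p \<in> hausdorff_diff r A x \<longleftrightarrow> p \<in> (\<Union>b \<in> {b. (b, y) \<in> r}. A b) - hausdorff_diff r A y"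
    for p
  proof (cases "p \<in> (\<Union>b \<in> {b. (b, y) \<in> r}. A b)")
    case True
    then obtain b where b: "(b, y) \<in> r" "p \<in> A b" by blast
    obtain b0 where b0: "(b0, y) \<in> r" "first_entry r A p b0"
      using first_entry_exists[where A = A, OF wo b] by blast
    then have "wlt r b0 x" by (simp add: below_x)
    then have "p \<in> hausdorff_diff r A x \<longleftrightarrow> rpar r b0 \<noteq> rpar r x"
      using mem_hausdorff_diff_iff[OF wo _ b0(2), of x] unfolding wlt_def by blast
    also have "\<dots> \<longleftrightarrow> rpar r b0 = rpar r y"
      using rpar_immpred[OF wo ip] rpar_cases[of r b0] rpar_cases[of r x] rpar_cases[of r y]
      by auto
    also have "\<dots> \<longleftrightarrow> p \<notin> hausdorff_diff r A y"
      using mem_hausdorff_diff_iff[OF wo b0] b0(1) unfolding wlt_def by auto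
    finally show ?thesis using True by blast
  next
    case False
    then have "p \<notin> (\<Union>b \<in> {b. wlt r b x}. A b)" by (simp add: below_x)
    then show ?thesis using False hausdorff_diff_subset[of r A x] by blast
  qed
  then show ?thesis by blast
qed

lemma hausdorff_diff_limit:
  assumes wo: "Well_order r" and x: "rpar r x = 0"
    and f: "\<And>i. wlt r (f i) x" "\<And>i. rpar r (f i) = 1"
    and cof: "\<And>b. wlt r b x \<Longrightarrow> \<exists>i. wlt r b (f i)"
  shows "hausdorff_diff r A x
           = (\<Union>i. (\<Union>b \<in> {b. (b, f i) \<in> r}. A b) - hausdorff_diff r A (f i))"
proof -
  have "p \<in> hausdorff_diff r A x \<longleftrightarrow>
          (\<exists>i. p \<in> (\<Union>b \<in> {b. (b, f i) \<in> r}. A b) - hausdorff_diff r A (f i))" for p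
  proof
    assume p: "p \<in> hausdorff_diff r A x"
    then obtain b where b: "(b, x) \<in> r" "p \<in> A b" unfolding hausdorff_diff_def wlt_def by blast
    obtain b0 where b0: "(b0, x) \<in> r" "first_entry r A p b0"
      using first_entry_exists[where A = A, OF wo b] by blast
    then have "wlt r b0 x" "rpar r b0 = 1"
      using mem_hausdorff_diff_iff[OF wo b0] p x rpar_cases[of r b0] by auto
    moreover obtain i where "wlt r b0 (f i)" using cof \<open>wlt r b0 x\<close> by blast
    ultimately show "\<exists>i. p \<in> (\<Union>b \<in> {b. (b, f i) \<in> r}. A b) - hausdorff_diff r A (f i)"
      using mem_below_diff_odd_iff[OF wo f(2) _ b0(2)] unfolding wlt_def by blast
  next
    assume "\<exists>i. p \<in> (\<Union>b \<in> {b. (b, f i) \<in> r}. A b) - hausdorff_diff r A (f i)"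
    then obtain i b where i: "p \<in> (\<Union>b \<in> {b. (b, f i) \<in> r}. A b) - hausdorff_diff r A (f i)"
      and b: "(b, f i) \<in> r" "p \<in> A b" by blast
    obtain b0 where b0: "(b0, f i) \<in> r" "first_entry r A p b0"
      using first_entry_exists[where A = A, OF wo b] by blast
    then have "rpar r b0 = 1" using mem_below_diff_odd_iff[OF wo f(2) b0] i by blast
    moreover have "wlt r b0 x" using le_wlt_trans[OF wo b0(1) f(1)] .
    ultimately show "p \<in> hausdorff_diff r A x"
      using mem_hausdorff_diff_iff[OF wo _ b0(2)] x unfolding wlt_def by auto
  qed
  then show ?thesis by blast
qed

lemma diff_pairs_zero:
  fixes L :: "'x set set"
  assumes wo: "Well_order r" and z: "is_zero_el r x" and x: "x \<in> Field r"
  shows "diff_pairs L r x = {({}, U) | U. U \<in> L}"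
proof -
  have le_x: "{b. (b, x) \<in> r} = {x}"
    using z well_order_refl[OF wo x] unfolding is_zero_el_def wlt_def by blast
  have empty: "hausdorff_diff r A x = {}" for A :: "_ \<Rightarrow> 'x set"
    using z unfolding is_zero_el_def hausdorff_diff_def by blast
  show ?thesis
  proof (intro equalityI subsetI)
    fix P assume "P \<in> diff_pairs L r x"
    then show "P \<in> {({}, U) | U. U \<in> L}"
      using well_order_refl[OF wo x] unfolding diff_pairs_def le_x empty by auto
  next
    fix P :: "'x set \<times> 'x set" assume "P \<in> {({}, U) | U. U \<in> L}"
    then obtain U where "U \<in> L" "P = ({}, U)" by blast
    then show "P \<in> diff_pairs L r x"
      using diff_pairsI[of x r "\<lambda>_. U" L] unfolding le_x empty by simp
  qed
qed

lemma diff_pairs_immpred: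
  assumes wo: "Well_order r" and ip: "immpred r y x"
  shows "diff_pairs L r x = p0_one_pairs L (flip_pairs (diff_pairs L r y))"
proof -
  have le_x: "{b. (b, x) \<in> r} = insert x {b. (b, y) \<in> r}"
    using immpred_le_iff[OF wo ip] by blast
  have "(S, U) \<in> p0_one_pairs L (flip_pairs (diff_pairs L r y))"
    if SU: "(S, U) \<in> diff_pairs L r x" for S U
  proof -
    obtain A where A: "\<And>b. (b, x) \<in> r \<Longrightarrow> A b \<in> L"
      and S: "S = hausdorff_diff r A x" and U: "U = (\<Union>b \<in> {b. (b, x) \<in> r}. A b)"
      using SU unfolding diff_pairs_def by blast
    let ?U = "\<Union>b \<in> {b. (b, y) \<in> r}. A b"
    have "hausdorff_diff r A y \<subseteq> ?U"
      using hausdorff_diff_subset[of r A y] unfolding wlt_def by blast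
    then have "S \<subseteq> ?U" "?U - S = hausdorff_diff r A y"
      unfolding S hausdorff_diff_immpred[OF wo ip] by blast+
    moreover have "(hausdorff_diff r A y, ?U) \<in> diff_pairs L r y"
      using A le_x by (intro diff_pairsI) blast
    ultimately have "(S, ?U) \<in> flip_pairs (diff_pairs L r y)"
      unfolding flip_pairs_def by simp
    moreover have "A x \<in> L" using A[of x] le_x by blast
    moreover have "U = A x \<union> ?U" unfolding U le_x by simp
    ultimately show ?thesis using p0_one_pairsI by metis
  qed
  moreover have "(S, U') \<in> diff_pairs L r x"
    if SU': "(S, U') \<in> p0_one_pairs L (flip_pairs (diff_pairs L r y))" for S U'
  proof -
    obtain U B0 where U': "U' = B0 \<union> U" and B0: "B0 \<in> L" and SU: "S \<subseteq> U"
      and "(U - S, U) \<in> diff_pairs L r y"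
      using SU' unfolding p0_one_pairs_def flip_pairs_def by blast
    then obtain A where A: "\<And>b. (b, y) \<in> r \<Longrightarrow> A b \<in> L"
      and D: "U - S = hausdorff_diff r A y" and U: "U = (\<Union>b \<in> {b. (b, y) \<in> r}. A b)"
      unfolding diff_pairs_def by blast
    define A' where "A' = A(x := B0)"
    have "A' x = B0" unfolding A'_def by simp
    have "(x, y) \<notin> r" using ip wlt_imp_not_le[OF wo] unfolding immpred_def by blast
    then have agree: "A' b = A b" if "(b, y) \<in> r" for b
      using that unfolding A'_def by auto
    have "hausdorff_diff r A' y = hausdorff_diff r A y"
      using agree by (intro hausdorff_diff_cong[OF wo]) (simp add: wlt_def)
    moreover have UA': "(\<Union>b \<in> {b. (b, y) \<in> r}. A' b) = U" using agree U by simp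
    ultimately have "hausdorff_diff r A' x = S"
      using hausdorff_diff_immpred[OF wo ip, of A'] D SU by blast
    moreover have "(\<Union>b \<in> {b. (b, x) \<in> r}. A' b) = U'"
      unfolding le_x using UA' U' by (simp add: \<open>A' x = B0\<close>)
    moreover have "A' b \<in> L" if "(b, x) \<in> r" for b
      using that le_x A B0 agree unfolding A'_def by auto
    ultimately show ?thesis using diff_pairsI[of x r A' L] by simp
  qed
  ultimately show ?thesis by auto
qed

lemma diff_pairs_limit_subset:
  assumes wo: "Well_order r" and x: "rpar r x = 0"
    and f: "\<And>i. wlt r (f i) x" "\<And>i. rpar r (f i) = 1"
    and cof: "\<And>b. wlt r b x \<Longrightarrow> \<exists>i. wlt r b (f i)"
  shows "diff_pairs L r x \<subseteq> p0_seq_pairs L (\<lambda>i. flip_pairs (diff_pairs L r (f i)))"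
proof clarify
  fix S U assume "(S, U) \<in> diff_pairs L r x"
  then obtain A where A: "\<And>b. (b, x) \<in> r \<Longrightarrow> A b \<in> L"
    and S: "S = hausdorff_diff r A x" and U: "U = (\<Union>b \<in> {b. (b, x) \<in> r}. A b)"
    unfolding diff_pairs_def by blast
  define UU where "UU i = (\<Union>b \<in> {b. (b, f i) \<in> r}. A b)" for i
  define SS where "SS i = UU i - hausdorff_diff r A (f i)" for i
  have below_x: "wlt r b x" if "(b, f i) \<in> r" for b i
    using le_wlt_trans[OF wo that f(1)] .
  have xx: "(x, x) \<in> r" using wlt_Field[OF f(1)[of 0]] well_order_refl[OF wo] by blast
  have "(SS i, UU i) \<in> flip_pairs (diff_pairs L r (f i))" for i
  proof -
    have "hausdorff_diff r A (f i) \<subseteq> UU i"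
      using hausdorff_diff_subset[of r A "f i"] unfolding UU_def wlt_def by blast
    then have "UU i - SS i = hausdorff_diff r A (f i)" unfolding SS_def by blast
    moreover have "(hausdorff_diff r A (f i), UU i) \<in> diff_pairs L r (f i)"
      unfolding UU_def using A below_x unfolding wlt_def by (intro diff_pairsI) blast
    ultimately show ?thesis unfolding flip_pairs_def SS_def by auto
  qed
  moreover have "SS i \<inter> UU j \<subseteq> SS j" for i j
  proof
    fix p assume p: "p \<in> SS i \<inter> UU j"
    then obtain b where b: "(b, f i) \<in> r" "p \<in> A b" unfolding SS_def UU_def by blast
    obtain b0 where b0: "(b0, f i) \<in> r" "first_entry r A p b0"
      using first_entry_exists[where A = A, OF wo b] by blast
    have "rpar r b0 = 1"
      using mem_below_diff_odd_iff[OF wo f(2) b0] p unfolding SS_def UU_def by blast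
    obtain b' where b': "(b', f j) \<in> r" "p \<in> A b'" using p unfolding UU_def by blast
    have "(b0, f j) \<in> r" using first_entry_le[OF wo b0(2) FieldI1[OF b0(1)] b'(2,1)] .
    then show "p \<in> SS j"
      using mem_below_diff_odd_iff[OF wo f(2) _ b0(2)] \<open>rpar r b0 = 1\<close>
      unfolding SS_def UU_def by blast
  qed
  moreover have "S = (\<Union>i. SS i)"
    unfolding S SS_def UU_def by (rule hausdorff_diff_limit[OF wo x f cof])
  moreover have "U = A x \<union> (\<Union>i. UU i)"
  proof -
    have "{b. (b, x) \<in> r} = insert x (\<Union>i. {b. (b, f i) \<in> r})"
    proof (intro equalityI subsetI)
      fix b assume "b \<in> {b. (b, x) \<in> r}"
      then have "b = x \<or> wlt r b x" unfolding wlt_def by blast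
      then show "b \<in> insert x (\<Union>i. {b. (b, f i) \<in> r})" using cof unfolding wlt_def by blast
    qed (use xx below_x in \<open>auto simp: wlt_def\<close>)
    then show ?thesis unfolding U UU_def by auto
  qed
  moreover have "A x \<in> L" using A xx .
  ultimately show "(S, U) \<in> p0_seq_pairs L (\<lambda>i. flip_pairs (diff_pairs L r (f i)))"
    using p0_seq_pairsI[of "A x" L SS UU] by simp
qed

lemma hausdorff_diff_glue:
  assumes wo: "Well_order r" and x: "rpar r x = 0"
    and f: "\<And>i. wlt r (f i) x" "\<And>i. rpar r (f i) = 1"
    and SU: "\<And>i. SS i \<subseteq> UU i" and coh: "\<And>i j. SS i \<inter> UU j \<subseteq> SS j"
    and D: "\<And>i. UU i - SS i = hausdorff_diff r (AA i) (f i)"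
    and U: "\<And>i. UU i = (\<Union>b \<in> {b. (b, f i) \<in> r}. AA i b)"
    and A: "\<And>b. b \<noteq> x \<Longrightarrow> A b = (\<Union>i \<in> {i. (b, f i) \<in> r}. AA i b)"
  shows "hausdorff_diff r A x = (\<Union>i. SS i)"
proof -
  have below_x: "wlt r b x" if "(b, f i) \<in> r" for b i
    using le_wlt_trans[OF wo that f(1)] .
  have "p \<in> hausdorff_diff r A x \<longleftrightarrow> (\<exists>i. p \<in> SS i)" for p
  proof (cases "\<exists>i b. (b, f i) \<in> r \<and> p \<in> AA i b")
    case True
    then obtain i b where b: "(b, f i) \<in> r" "p \<in> AA i b" by blast
    then have bx: "(b, x) \<in> r" "p \<in> A b" using below_x A unfolding wlt_def by blast+
    obtain b0 where b0: "(b0, x) \<in> r" "first_entry r A p b0"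
      using first_entry_exists[where A = A, OF wo bx] by blast
    have "(b0, f i) \<in> r" using first_entry_le[OF wo b0(2) FieldI1[OF b0(1)] bx(2) b(1)] .
    then have "wlt r b0 x" using below_x by blast
    then obtain i0 where i0: "(b0, f i0) \<in> r" "p \<in> AA i0 b0"
      using A b0(2) unfolding first_entry_def wlt_def by blast
    have "AA i0 g \<subseteq> A g" if "wlt r g b0" for g
      using A below_x that i0(1) wlt_le_trans[OF wo] unfolding wlt_def by blast
    then have first: "first_entry r (AA i0) p b0" using first_entry_mono b0(2) i0(2) by metis
    have "SS i0 = UU i0 - hausdorff_diff r (AA i0) (f i0)" using SU[of i0] D[of i0] by blast
    then have "p \<in> SS i0 \<longleftrightarrow> rpar r b0 = 1"
      using mem_below_diff_odd_iff[OF wo f(2) i0(1) first] unfolding U[of i0] by simp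
    moreover have "p \<in> UU i0" using U i0 by blast
    then have "(\<exists>i. p \<in> SS i) \<longleftrightarrow> p \<in> SS i0" using coh by blast
    moreover have "p \<in> hausdorff_diff r A x \<longleftrightarrow> rpar r b0 = 1"
      using mem_hausdorff_diff_iff[OF wo b0] \<open>wlt r b0 x\<close> x rpar_cases[of r b0] by auto
    ultimately show ?thesis by blast
  next
    case False
    then have "p \<notin> UU i" for i using U by blast
    moreover have "p \<notin> A b" if "wlt r b x" for b using False A that unfolding wlt_def by blast
    ultimately show ?thesis using SU hausdorff_diff_subset[of r A x] by blast
  qed
  then show ?thesis by blast
qed

lemma p0_seq_pairs_subset_diff_pairs:
  assumes base: "is_base X L" and wo: "Well_order r" and x: "rpar r x = 0"
    and f: "\<And>i. wlt r (f i) x" "\<And>i. rpar r (f i) = 1"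
    and cof: "\<And>b. wlt r b x \<Longrightarrow> \<exists>i. wlt r b (f i)"
  shows "p0_seq_pairs L (\<lambda>i. flip_pairs (diff_pairs L r (f i))) \<subseteq> diff_pairs L r x"
proof
  fix P assume "P \<in> p0_seq_pairs L (\<lambda>i. flip_pairs (diff_pairs L r (f i)))"
  then obtain SS UU B0 where P: "P = ((\<Union>i. SS i), B0 \<union> (\<Union>i. UU i))" and B0: "B0 \<in> L"
    and G: "\<And>i. (SS i, UU i) \<in> flip_pairs (diff_pairs L r (f i))"
    and coh: "\<And>i j. SS i \<inter> UU j \<subseteq> SS j"
    unfolding p0_seq_pairs_def by blast
  have SU: "SS i \<subseteq> UU i" and "(UU i - SS i, UU i) \<in> diff_pairs L r (f i)" for i
    using G[of i] unfolding flip_pairs_def by simp_all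
  then have "\<forall>i. \<exists>Ai. (\<forall>b. (b, f i) \<in> r \<longrightarrow> Ai b \<in> L) \<and> UU i - SS i = hausdorff_diff r Ai (f i)
                 \<and> UU i = (\<Union>b \<in> {b. (b, f i) \<in> r}. Ai b)"
    unfolding mem_diff_pairs_iff by blast
  then obtain AA where AA: "\<And>i b. (b, f i) \<in> r \<Longrightarrow> AA i b \<in> L"
    "\<And>i. UU i - SS i = hausdorff_diff r (AA i) (f i)"
    "\<And>i. UU i = (\<Union>b \<in> {b. (b, f i) \<in> r}. AA i b)"
    by metis
  define A where "A b = (if b = x then B0 else \<Union>i \<in> {i. (b, f i) \<in> r}. AA i b)" for b
  have A_x: "A x = B0" and A_below: "\<And>b. b \<noteq> x \<Longrightarrow> A b = (\<Union>i \<in> {i. (b, f i) \<in> r}. AA i b)"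
    unfolding A_def by simp_all
  have below_x: "wlt r b x" if "(b, f i) \<in> r" for b i
    using le_wlt_trans[OF wo that f(1)] .
  have "A b \<in> L" if "(b, x) \<in> r" for b
  proof (cases "b = x")
    case False
    then show ?thesis unfolding A_below[OF False] using AA(1) by (intro is_base_countable_UN[OF base]) auto
  qed (simp add: A_x B0)
  moreover have "hausdorff_diff r A x = (\<Union>i. SS i)"
    by (rule hausdorff_diff_glue[OF wo x f SU coh AA(2) AA(3) A_below])
  moreover have "(\<Union>b \<in> {b. (b, x) \<in> r}. A b) = B0 \<union> (\<Union>i. UU i)"
  proof -
    have "(\<Union>b \<in> {b. wlt r b x}. A b) = (\<Union>i. \<Union>b \<in> {b. (b, f i) \<in> r}. AA i b)"
    proof (intro equalityI subsetI)
      fix p assume "p \<in> (\<Union>b \<in> {b. wlt r b x}. A b)"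
      then obtain b where "wlt r b x" "p \<in> A b" by blast
      then show "p \<in> (\<Union>i. \<Union>b \<in> {b. (b, f i) \<in> r}. AA i b)"
        using A_below unfolding wlt_def by auto
    next
      fix p assume "p \<in> (\<Union>i. \<Union>b \<in> {b. (b, f i) \<in> r}. AA i b)"
      then obtain i b where b: "(b, f i) \<in> r" "p \<in> AA i b" by blast
      then have "wlt r b x" using below_x by blast
      moreover have "p \<in> A b" using b A_below \<open>wlt r b x\<close> unfolding wlt_def by auto
      ultimately show "p \<in> (\<Union>b \<in> {b. wlt r b x}. A b)" by blast
    qed
    moreover have "{b. (b, x) \<in> r} = insert x {b. wlt r b x}"
      using wlt_Field[OF f(1)[of 0]] well_order_refl[OF wo] unfolding wlt_def by blast
    ultimately show ?thesis unfolding AA(3) by (simp add: A_x)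
  qed
  ultimately show "P \<in> diff_pairs L r x" unfolding P using diff_pairsI[of x r A L] by simp
qed

lemma diff_pairs_limit:
  assumes "is_base X L" and "Well_order r" and "rpar r x = 0"
    and "\<And>i. wlt r (f i) x" "\<And>i. rpar r (f i) = 1"
    and "\<And>b. wlt r b x \<Longrightarrow> \<exists>i. wlt r b (f i)"
  shows "diff_pairs L r x = p0_seq_pairs L (\<lambda>i. flip_pairs (diff_pairs L r (f i)))"
  using diff_pairs_limit_subset p0_seq_pairs_subset_diff_pairs assms by (metis subset_antisym)

lemma Dclass_eq_diff_pairs:
  assumes base: "is_base X L" and wo: "Well_order r" and x: "x \<in> Field r"
  shows "Dclass L r x = {S. (S, X) \<in> diff_pairs L r x}"
proof -
  have LX: "X \<in> L" "L \<subseteq> Pow X" using base unfolding is_base_def by auto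
  have "Dclass L r x = {hausdorff_diff r A x | A. \<forall>b. wlt r b x \<longrightarrow> A b \<in> L}"
    unfolding Dclass_def hausdorff_diff_def ..
  also have "\<dots> = {S. (S, X) \<in> diff_pairs L r x}"
  proof (intro equalityI subsetI)
    fix S assume "S \<in> {hausdorff_diff r A x | A. \<forall>b. wlt r b x \<longrightarrow> A b \<in> L}"
    then obtain A where A: "\<And>b. wlt r b x \<Longrightarrow> A b \<in> L" and S: "S = hausdorff_diff r A x"
      by blast
    define A' where "A' = A(x := X)"
    have "hausdorff_diff r A' x = hausdorff_diff r A x"
      by (rule hausdorff_diff_cong[OF wo]) (auto simp: A'_def wlt_def)
    moreover have A'L: "A' b \<in> L" if "(b, x) \<in> r" for b
      using A[of b] that LX(1) unfolding A'_def wlt_def by auto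
    moreover have "(\<Union>b \<in> {b. (b, x) \<in> r}. A' b) = X"
    proof
      show "(\<Union>b \<in> {b. (b, x) \<in> r}. A' b) \<subseteq> X" using A'L LX(2) by blast
      show "X \<subseteq> (\<Union>b \<in> {b. (b, x) \<in> r}. A' b)"
        using well_order_refl[OF wo x] unfolding A'_def by auto
    qed
    ultimately show "S \<in> {S. (S, X) \<in> diff_pairs L r x}"
      using diff_pairsI[of x r A' L] S by simp
  next
    fix S assume "S \<in> {S. (S, X) \<in> diff_pairs L r x}"
    then obtain A where "\<And>b. (b, x) \<in> r \<Longrightarrow> A b \<in> L" "S = hausdorff_diff r A x"
      unfolding mem_Collect_eq mem_diff_pairs_iff by blast
    then show "S \<in> {hausdorff_diff r A x | A. \<forall>b. wlt r b x \<longrightarrow> A b \<in> L}"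
      unfolding wlt_def by blast
  qed
  finally show ?thesis .
qed

definition region :: "nat list set \<Rightarrow> (nat list \<Rightarrow> 'x set) \<Rightarrow> nat list \<Rightarrow> 'x set" where
  "region P B p = B p - (\<Union>q \<in> {q \<in> P. tle q p \<and> q \<noteq> p}. B q)"

definition forest_pairs :: "'x set set \<Rightarrow> ltree \<Rightarrow> ('x set \<times> 'x set) set" where
  "forest_pairs L T = {(S, U). \<exists>B. (\<forall>p \<in> fst T. B p \<in> L) \<and> U = (\<Union>p \<in> fst T. B p)
     \<and> S = (\<Union>p \<in> {p \<in> fst T. snd T p = 1}. region (fst T) B p)
     \<and> U - S = (\<Union>p \<in> {p \<in> fst T. snd T p \<noteq> 1}. region (fst T) B p)}"

definition tree_wf :: "nat list set \<Rightarrow> bool" where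
  "tree_wf P \<longleftrightarrow> (\<forall>Q \<subseteq> P. \<forall>p \<in> Q. \<exists>q \<in> Q. tle q p \<and> (\<forall>q' \<in> Q. tle q' q \<longrightarrow> q' = q))"

definition two_labelled :: "ltree \<Rightarrow> bool" where
  "two_labelled T \<longleftrightarrow> (\<forall>p \<in> fst T. snd T p \<le> 1)"

lemma region_subset: "region P B p \<subseteq> B p"
  unfolding region_def by blast

lemma tree_wf_region:
  assumes "tree_wf P" "p \<in> P" "x \<in> B p"
  shows "\<exists>q \<in> P. tle q p \<and> x \<in> region P B q"
proof -
  let ?Q = "{q \<in> P. x \<in> B q}"
  have "?Q \<subseteq> P" "p \<in> ?Q" using assms(2,3) by auto
  then obtain q where q: "q \<in> ?Q" "tle q p" and min: "\<forall>q' \<in> ?Q. tle q' q \<longrightarrow> q' = q"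
    using assms(1) unfolding tree_wf_def by blast
  then have "x \<in> region P B q" unfolding region_def by blast
  then show ?thesis using q by blast
qed

lemma mem_forest_pairs_iff:
  "(S, U) \<in> forest_pairs L T \<longleftrightarrow> (\<exists>B. (\<forall>p \<in> fst T. B p \<in> L) \<and> U = (\<Union>p \<in> fst T. B p)
     \<and> S = (\<Union>p \<in> {p \<in> fst T. snd T p = 1}. region (fst T) B p)
     \<and> U - S = (\<Union>p \<in> {p \<in> fst T. snd T p \<noteq> 1}. region (fst T) B p))"
  unfolding forest_pairs_def by simp

lemma forest_pairs_subset:
  assumes "(S, U) \<in> forest_pairs L T"
  shows "S \<subseteq> U"
proof -
  obtain B where "U = (\<Union>p \<in> fst T. B p)" "S = (\<Union>p \<in> {p \<in> fst T. snd T p = 1}. region (fst T) B p)"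
    using assms unfolding mem_forest_pairs_iff by blast
  then show ?thesis using region_subset[of "fst T" B] by blast
qed

lemma forest_pairs_treq:
  assumes "treq T T'"
  shows "forest_pairs L T = forest_pairs L T'"
proof -
  have "fst T' = fst T" using assms unfolding treq_def by simp
  moreover have "{p \<in> fst T. snd T p = 1} = {p \<in> fst T'. snd T' p = 1}"
    "{p \<in> fst T. snd T p \<noteq> 1} = {p \<in> fst T'. snd T' p \<noteq> 1}"
    using assms unfolding treq_def by auto
  ultimately show ?thesis unfolding forest_pairs_def by simp
qed

lemma forest_pairs_single0: "forest_pairs L single0 = {({}, U) | U. U \<in> L}"
proof -
  have reg: "region {[]} B [] = B []" for B :: "nat list \<Rightarrow> 'x set"
    unfolding region_def by auto
  show ?thesis unfolding forest_pairs_def single0_def by (auto simp: reg intro!: exI[of _ "\<lambda>_. _"])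
qed

lemma forest_pairs_empty: "forest_pairs L ({}, c) = {({}, {})}"
  unfolding forest_pairs_def by auto

lemma forest_pairs_flip:
  assumes "two_labelled T"
  shows "forest_pairs L (flip T) = flip_pairs (forest_pairs L T)"
proof -
  let ?R = "\<lambda>B Q. \<Union>p \<in> Q. region (fst T) B p"
  let ?ones = "{p \<in> fst T. snd T p = 1}" and ?others = "{p \<in> fst T. snd T p \<noteq> 1}"
  have ones: "{p \<in> fst (flip T). snd (flip T) p = 1} = ?others"
    and others: "{p \<in> fst (flip T). snd (flip T) p \<noteq> 1} = ?ones"
    using assms unfolding two_labelled_def flip_def by force+
  have swap: "(U = (\<Union>p \<in> fst T. B p) \<and> S = ?R B ?others \<and> U - S = ?R B ?ones) \<longleftrightarrow>
      (U = (\<Union>p \<in> fst T. B p) \<and> S \<subseteq> U \<and> U - S = ?R B ?ones \<and> U - (U - S) = ?R B ?others)"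
    for B :: "nat list \<Rightarrow> 'x set" and S U
  proof -
    have "?R B ?others \<subseteq> (\<Union>p \<in> fst T. B p)" using region_subset[of "fst T" B] by blast
    moreover have "U - (U - S) = S" if "S \<subseteq> U" using that by (simp add: Diff_Diff_Int Int_absorb1)
    ultimately show ?thesis by auto
  qed
  have "(S, U) \<in> forest_pairs L (flip T) \<longleftrightarrow> (\<exists>B. (\<forall>p \<in> fst T. B p \<in> L) \<and>
      (U = (\<Union>p \<in> fst T. B p) \<and> S = ?R B ?others \<and> U - S = ?R B ?ones))" for S U
    unfolding mem_forest_pairs_iff ones others by (simp add: flip_def)
  also have "\<dots> S U \<longleftrightarrow> (S, U) \<in> flip_pairs (forest_pairs L T)" for S U
    unfolding swap flip_pairs_def mem_forest_pairs_iff by auto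
  finally show ?thesis by auto
qed

lemma mem_p0_seq: "p \<in> fst (p0_seq Ts) \<longleftrightarrow> p = [] \<or> (\<exists>i q. p = i # q \<and> q \<in> fst (Ts i))"
  unfolding p0_seq_def by auto

lemma Nil_in_p0_seq: "[] \<in> fst (p0_seq Ts)"
  unfolding p0_seq_def by auto

lemma Cons_in_p0_seq_iff: "i # q \<in> fst (p0_seq Ts) \<longleftrightarrow> q \<in> fst (Ts i)"
  unfolding p0_seq_def by auto

lemma snd_p0_seq: "snd (p0_seq Ts) [] = 0" "snd (p0_seq Ts) (i # q) = snd (Ts i) q"
  unfolding p0_seq_def by auto

lemma tle_Nil: "tle p []"
  unfolding tle_def by auto

lemma tle_Cons: "tle p (i # q) \<longleftrightarrow> (\<exists>p'. p = i # p' \<and> tle p' q)"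
  unfolding tle_def by auto

lemma UN_p0_seq:
  "(\<Union>p \<in> {p \<in> fst (p0_seq Ts). Q p}. F p) =
     (if Q [] then F [] else {}) \<union> (\<Union>i. \<Union>q \<in> {q \<in> fst (Ts i). Q (i # q)}. F (i # q))"
  by (auto simp: mem_p0_seq Nil_in_p0_seq Cons_in_p0_seq_iff)

lemma region_p0_seq_Cons:
  "region (fst (p0_seq Ts)) B (i # q) = region (fst (Ts i)) (\<lambda>q. B (i # q)) q"
proof -
  have "{p \<in> fst (p0_seq Ts). tle p (i # q) \<and> p \<noteq> i # q} =
        (\<lambda>p. i # p) ` {p \<in> fst (Ts i). tle p q \<and> p \<noteq> q}"
    by (auto simp: tle_Cons Cons_in_p0_seq_iff)
  then show ?thesis unfolding region_def by simp
qed

lemma region_p0_seq_Nil: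
  "region (fst (p0_seq Ts)) B [] = B [] - (\<Union>i. \<Union>q \<in> fst (Ts i). B (i # q))"
proof -
  have "{p \<in> fst (p0_seq Ts). tle p [] \<and> p \<noteq> []} = {i # q | i q. q \<in> fst (Ts i)}"
    by (auto simp: mem_p0_seq tle_Nil)
  then show ?thesis unfolding region_def by auto
qed

lemma two_labelled_p0_seq: "(\<And>i. two_labelled (Ts i)) \<Longrightarrow> two_labelled (p0_seq Ts)"
  unfolding two_labelled_def by (auto simp: mem_p0_seq snd_p0_seq)

lemma tree_wf_p0_seq:
  assumes wf: "\<And>i. tree_wf (fst (Ts i))"
  shows "tree_wf (fst (p0_seq Ts))"
  unfolding tree_wf_def
proof (intro allI impI ballI)
  fix Q p assume Q: "Q \<subseteq> fst (p0_seq Ts)" and p: "p \<in> Q"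
  let ?min = "\<lambda>q. q \<in> Q \<and> (\<forall>q' \<in> Q. tle q' q \<longrightarrow> q' = q)"
  have branch: "\<exists>q'. tle q' q \<and> ?min (i # q')" if "i # q \<in> Q" for i q
  proof -
    have "{q. i # q \<in> Q} \<subseteq> fst (Ts i)" "q \<in> {q. i # q \<in> Q}"
      using Q that by (auto simp: Cons_in_p0_seq_iff)
    then obtain q' where "q' \<in> {q. i # q \<in> Q}" "tle q' q"
      and "\<forall>q'' \<in> {q. i # q \<in> Q}. tle q'' q' \<longrightarrow> q'' = q'"
      using wf[of i, unfolded tree_wf_def, rule_format] by meson
    then show ?thesis by (auto simp: tle_Cons)
  qed
  show "\<exists>q \<in> Q. tle q p \<and> (\<forall>q' \<in> Q. tle q' q \<longrightarrow> q' = q)"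
  proof (cases p)
    case (Cons i q)
    then obtain q' where q': "tle q' q" "?min (i # q')" using branch p by blast
    then have "tle (i # q') p" using Cons by (auto simp: tle_Cons)
    then show ?thesis using q'(2) by blast
  next
    case Nil
    show ?thesis
    proof (cases "\<exists>i q. i # q \<in> Q")
      case True
      then obtain i q where "i # q \<in> Q" by blast
      then obtain q' where "?min (i # q')" using branch by blast
      then show ?thesis using Nil tle_Nil by blast
    next
      case False
      then have "q' = []" if "q' \<in> Q" for q' using that by (cases q') auto
      then show ?thesis using Nil p tle_Nil by blast
    qed
  qed
qed

lemma coherent_Un_UN_Diff:
  assumes SU: "\<And>i. SS i \<subseteq> UU i" and coh: "\<And>i j. SS i \<inter> UU j \<subseteq> SS j"
  shows "(B0 \<union> (\<Union>i. UU i)) - (\<Union>i. SS i) = (B0 - (\<Union>i. UU i)) \<union> (\<Union>i. UU i - SS i)"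
proof -
  have "x \<notin> SS j" if "x \<in> UU i" "x \<notin> SS i" for x i j
    using that coh[of j i] by blast
  then show ?thesis using SU by blast
qed

lemma forest_pairs_p0_seq_subset:
  assumes wf: "\<And>i. tree_wf (fst (Ts i))"
  shows "forest_pairs L (p0_seq Ts) \<subseteq> p0_seq_pairs L (\<lambda>i. forest_pairs L (Ts i))"
proof clarify
  fix S U assume "(S, U) \<in> forest_pairs L (p0_seq Ts)"
  then obtain B where B: "\<forall>p \<in> fst (p0_seq Ts). B p \<in> L" "U = (\<Union>p \<in> fst (p0_seq Ts). B p)"
    "S = (\<Union>p \<in> {p \<in> fst (p0_seq Ts). snd (p0_seq Ts) p = 1}. region (fst (p0_seq Ts)) B p)"
    "U - S = (\<Union>p \<in> {p \<in> fst (p0_seq Ts). snd (p0_seq Ts) p \<noteq> 1}. region (fst (p0_seq Ts)) B p)"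
    unfolding mem_forest_pairs_iff by blast
  define Bi where "Bi i = (\<lambda>q. B (i # q))" for i
  define SS where "SS i = (\<Union>q \<in> {q \<in> fst (Ts i). snd (Ts i) q = 1}. region (fst (Ts i)) (Bi i) q)"
    for i
  define ZZ where "ZZ i = (\<Union>q \<in> {q \<in> fst (Ts i). snd (Ts i) q \<noteq> 1}. region (fst (Ts i)) (Bi i) q)"
    for i
  define UU where "UU i = (\<Union>q \<in> fst (Ts i). Bi i q)" for i
  have S: "S = (\<Union>i. SS i)"
    unfolding B(3) UN_p0_seq snd_p0_seq SS_def Bi_def by (simp add: region_p0_seq_Cons)
  have U: "U = B [] \<union> (\<Union>i. UU i)"
    unfolding B(2) UU_def Bi_def using UN_p0_seq[where Q = "\<lambda>_. True" and F = B] by simp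
  have "U - S = region (fst (p0_seq Ts)) B [] \<union> (\<Union>i. ZZ i)"
    unfolding B(4) UN_p0_seq snd_p0_seq ZZ_def Bi_def by (simp add: region_p0_seq_Cons)
  then have ZS: "ZZ i \<inter> SS j = {}" for i j using S by blast
  have cover: "UU i \<subseteq> SS i \<union> ZZ i" for i
  proof
    fix x assume "x \<in> UU i"
    then obtain q where q: "q \<in> fst (Ts i)" "x \<in> Bi i q" unfolding UU_def by blast
    obtain q' where "q' \<in> fst (Ts i)" "x \<in> region (fst (Ts i)) (Bi i) q'"
      using tree_wf_region[where B = "Bi i", OF wf q] by blast
    then show "x \<in> SS i \<union> ZZ i" unfolding SS_def ZZ_def by blast
  qed
  have SU: "SS i \<subseteq> UU i" "ZZ i \<subseteq> UU i" for i
    unfolding SS_def ZZ_def UU_def using region_subset[of "fst (Ts i)" "Bi i"] by blast+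
  have "(SS i, UU i) \<in> forest_pairs L (Ts i)" for i
  proof -
    have "UU i - SS i = ZZ i" using cover[of i] SU[of i] ZS[of i i] by blast
    moreover have "\<forall>q \<in> fst (Ts i). Bi i q \<in> L"
      using B(1) Cons_in_p0_seq_iff unfolding Bi_def by blast
    ultimately show ?thesis
      unfolding mem_forest_pairs_iff SS_def ZZ_def UU_def by (intro exI[of _ "Bi i"]) simp
  qed
  moreover have "SS i \<inter> UU j \<subseteq> SS j" for i j using cover[of j] ZS[of j i] by blast
  moreover have "B [] \<in> L" using B(1) Nil_in_p0_seq by blast
  ultimately show "(S, U) \<in> p0_seq_pairs L (\<lambda>i. forest_pairs L (Ts i))"
    unfolding S U by (intro p0_seq_pairsI)
qed

lemma p0_seq_pairs_subset_forest_pairs: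
  "p0_seq_pairs L (\<lambda>i. forest_pairs L (Ts i)) \<subseteq> forest_pairs L (p0_seq Ts)"
proof
  fix P assume "P \<in> p0_seq_pairs L (\<lambda>i. forest_pairs L (Ts i))"
  then obtain SS UU B0 where P: "P = ((\<Union>i. SS i), B0 \<union> (\<Union>i. UU i))" and B0: "B0 \<in> L"
    and G: "\<And>i. (SS i, UU i) \<in> forest_pairs L (Ts i)" and coh: "\<And>i j. SS i \<inter> UU j \<subseteq> SS j"
    unfolding p0_seq_pairs_def by blast
  let ?repr = "\<lambda>i Bi. (\<forall>q \<in> fst (Ts i). Bi q \<in> L) \<and> UU i = (\<Union>q \<in> fst (Ts i). Bi q)
      \<and> SS i = (\<Union>q \<in> {q \<in> fst (Ts i). snd (Ts i) q = 1}. region (fst (Ts i)) Bi q)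
      \<and> UU i - SS i = (\<Union>q \<in> {q \<in> fst (Ts i). snd (Ts i) q \<noteq> 1}. region (fst (Ts i)) Bi q)"
  have "\<forall>i. \<exists>Bi. ?repr i Bi" using G unfolding mem_forest_pairs_iff by blast
  from choice[OF this] obtain Bw where "\<forall>i. ?repr i (Bw i)" ..
  then have Bw: "\<And>i. \<forall>q \<in> fst (Ts i). Bw i q \<in> L" "\<And>i. UU i = (\<Union>q \<in> fst (Ts i). Bw i q)"
    "\<And>i. SS i = (\<Union>q \<in> {q \<in> fst (Ts i). snd (Ts i) q = 1}. region (fst (Ts i)) (Bw i) q)"
    "\<And>i. UU i - SS i = (\<Union>q \<in> {q \<in> fst (Ts i). snd (Ts i) q \<noteq> 1}. region (fst (Ts i)) (Bw i) q)"
    by iprover+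
  define B where "B p = (case p of [] \<Rightarrow> B0 | i # q \<Rightarrow> Bw i q)" for p
  have B_Cons: "(\<lambda>q. B (i # q)) = Bw i" for i unfolding B_def by simp
  have SU: "SS i \<subseteq> UU i" for i using forest_pairs_subset[OF G] .
  have "((\<Union>i. SS i), B0 \<union> (\<Union>i. UU i)) \<in> forest_pairs L (p0_seq Ts)"
    unfolding mem_forest_pairs_iff
  proof (intro exI[of _ B] conjI)
    show "\<forall>p \<in> fst (p0_seq Ts). B p \<in> L" using B0 Bw(1) by (auto simp: mem_p0_seq B_def)
    show "B0 \<union> (\<Union>i. UU i) = (\<Union>p \<in> fst (p0_seq Ts). B p)"
      using UN_p0_seq[where Q = "\<lambda>_. True" and F = B] Bw(2) by (simp add: B_def)
    show "(\<Union>i. SS i) = (\<Union>p \<in> {p \<in> fst (p0_seq Ts). snd (p0_seq Ts) p = 1}. region (fst (p0_seq Ts)) B p)"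
      unfolding UN_p0_seq snd_p0_seq region_p0_seq_Cons B_Cons Bw(3) by simp
    show "B0 \<union> (\<Union>i. UU i) - (\<Union>i. SS i)
        = (\<Union>p \<in> {p \<in> fst (p0_seq Ts). snd (p0_seq Ts) p \<noteq> 1}. region (fst (p0_seq Ts)) B p)"
      unfolding coherent_Un_UN_Diff[OF SU coh] UN_p0_seq snd_p0_seq region_p0_seq_Cons
        region_p0_seq_Nil B_Cons Bw(4)[symmetric]
      by (simp add: B_def Bw(2))
  qed
  then show "P \<in> forest_pairs L (p0_seq Ts)" unfolding P .
qed

lemma forest_pairs_p0_seq:
  "(\<And>i. tree_wf (fst (Ts i))) \<Longrightarrow>
    forest_pairs L (p0_seq Ts) = p0_seq_pairs L (\<lambda>i. forest_pairs L (Ts i))"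
  using forest_pairs_p0_seq_subset p0_seq_pairs_subset_forest_pairs by (metis subset_antisym)

lemma UN_nat_eq_zero:
  assumes "\<And>i. i \<noteq> (0::nat) \<Longrightarrow> F i = {}"
  shows "(\<Union>i. F i) = F 0"
proof
  show "(\<Union>i. F i) \<subseteq> F 0" using assms by (intro UN_least) (metis empty_subsetI order_refl)
qed blast

lemma p0_seq_pairs_single:
  assumes G0: "Gs 0 = G" and G_empty: "\<And>i. i \<noteq> 0 \<Longrightarrow> Gs i = {({}, {})}"
  shows "p0_seq_pairs L Gs = p0_one_pairs L G"
proof (intro equalityI subsetI)
  fix P assume "P \<in> p0_seq_pairs L Gs"
  then obtain SS UU B0 where P: "P = ((\<Union>i. SS i), B0 \<union> (\<Union>i. UU i))" and B0: "B0 \<in> L"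
    and G: "\<And>i. (SS i, UU i) \<in> Gs i"
    unfolding p0_seq_pairs_def by blast
  have "SS i = {}" "UU i = {}" if "i \<noteq> 0" for i using G[of i] G_empty[OF that] by simp_all
  then have "(\<Union>i. SS i) = SS 0" "(\<Union>i. UU i) = UU 0" by (simp_all add: UN_nat_eq_zero)
  then show "P \<in> p0_one_pairs L G" using G[of 0] B0 G0 unfolding P by (simp add: p0_one_pairsI)
next
  fix P assume "P \<in> p0_one_pairs L G"
  then obtain S U B0 where P: "P = (S, B0 \<union> U)" and "B0 \<in> L" "(S, U) \<in> G"
    unfolding p0_one_pairs_def by blast
  then have "((\<Union>i::nat. if i = 0 then S else {}), B0 \<union> (\<Union>i::nat. if i = 0 then U else {}))
      \<in> p0_seq_pairs L Gs"
    using G0 G_empty by (intro p0_seq_pairsI) auto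
  moreover have "(\<Union>i::nat. if i = 0 then S else {}) = S" "(\<Union>i::nat. if i = 0 then U else {}) = U"
    by auto
  ultimately show "P \<in> p0_seq_pairs L Gs" unfolding P by simp
qed

lemma tree_wf_empty: "tree_wf {}"
  unfolding tree_wf_def by simp

lemma p0_one_treq_p0_seq: "treq (p0_one T) (p0_seq (\<lambda>i. if i = 0 then T else ({}, snd T)))"
  unfolding treq_def p0_one_def p0_seq_def by (auto split: list.splits if_splits)

lemma forest_pairs_p0_one:
  assumes "tree_wf (fst T)"
  shows "forest_pairs L (p0_one T) = p0_one_pairs L (forest_pairs L T)"
proof -
  have "forest_pairs L (p0_one T) = forest_pairs L (p0_seq (\<lambda>i. if i = 0 then T else ({}, snd T)))"
    by (rule forest_pairs_treq[OF p0_one_treq_p0_seq])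
  also have "\<dots> = p0_seq_pairs L (\<lambda>i. forest_pairs L (if i = 0 then T else ({}, snd T)))"
    using assms tree_wf_empty by (intro forest_pairs_p0_seq) simp
  also have "\<dots> = p0_one_pairs L (forest_pairs L T)"
    by (rule p0_seq_pairs_single) (simp_all add: forest_pairs_empty)
  finally show ?thesis .
qed

lemma tree_wf_p0_one: "tree_wf (fst T) \<Longrightarrow> tree_wf (fst (p0_one T))"
  using p0_one_treq_p0_seq tree_wf_p0_seq[of "\<lambda>i. if i = 0 then T else ({}, snd T)"] tree_wf_empty
  unfolding treq_def by simp

lemma two_labelled_flip: "two_labelled (flip T)"
  unfolding two_labelled_def flip_def by simp

lemma two_labelled_p0_one: "two_labelled T \<Longrightarrow> two_labelled (p0_one T)"
  unfolding two_labelled_def p0_one_def by (auto split: list.splits)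

lemma two_labelled_single0: "two_labelled single0"
  unfolding two_labelled_def single0_def by simp

lemma tree_wf_single0: "tree_wf (fst single0)"
  unfolding tree_wf_def single0_def
proof (intro allI impI ballI)
  fix Q and p :: "nat list" assume "Q \<subseteq> fst ({[]}, \<lambda>_. 0::nat)" "p \<in> Q"
  then have "p = []" "\<forall>q \<in> Q. q = []" by auto
  then show "\<exists>q \<in> Q. tle q p \<and> (\<forall>q' \<in> Q. tle q' q \<longrightarrow> q' = q)"
    using \<open>p \<in> Q\<close> tle_Nil by blast
qed

lemma fst_flip [simp]: "fst (flip T) = fst T"
  unfolding flip_def by simp

lemma treq_fst: "treq T T' \<Longrightarrow> fst T = fst T'"
  unfolding treq_def by simp

lemma two_labelled_treq: "treq T T' \<Longrightarrow> two_labelled T' \<Longrightarrow> two_labelled T"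
  unfolding treq_def two_labelled_def by auto

lemma forest_pairs_eq_diff_pairs:
  fixes L :: "'x set set" and t :: "'a \<Rightarrow> ltree"
  assumes base: "is_base X L" and wo: "Well_order r" and tf: "Tfam r t"
  shows "x \<in> Field r \<Longrightarrow>
    two_labelled (t x) \<and> tree_wf (fst (t x)) \<and> forest_pairs L (t x) = diff_pairs L r x"
proof (induction x rule: wf_induct_rule[OF conjunct2[OF wo[unfolded well_order_on_def]]])
  case (1 x)
  have IH: "two_labelled (t y) \<and> tree_wf (fst (t y)) \<and> forest_pairs L (t y) = diff_pairs L r y"
    if "wlt r y x" for y
    using 1(1)[of y] that wlt_Field[OF that] unfolding wlt_def by blast
  note T = tf[unfolded Tfam_def, rule_format, OF 1(2)]
  consider (zero) "is_zero_el r x" | (succ) y where "immpred r y x" | (limit) "is_limit_el r x"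
    unfolding is_zero_el_def is_limit_el_def by blast
  then show ?case
  proof cases
    case zero
    then have tr: "treq (t x) single0" using T by blast
    have "forest_pairs L (t x) = diff_pairs L r x"
      unfolding forest_pairs_treq[OF tr] forest_pairs_single0 diff_pairs_zero[OF wo zero 1(2)] ..
    then show ?thesis
      using two_labelled_treq[OF tr two_labelled_single0] treq_fst[OF tr] tree_wf_single0 by simp
  next
    case (succ y)
    then have tr: "treq (t x) (p0_one (flip (t y)))" using T by blast
    have ih: "two_labelled (t y)" "tree_wf (fst (t y))" "forest_pairs L (t y) = diff_pairs L r y"
      using IH succ unfolding immpred_def by blast+
    have "forest_pairs L (t x) = forest_pairs L (p0_one (flip (t y)))"
      by (rule forest_pairs_treq[OF tr])
    also have "\<dots> = p0_one_pairs L (forest_pairs L (flip (t y)))"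
      using ih(2) by (intro forest_pairs_p0_one) simp
    also have "\<dots> = p0_one_pairs L (flip_pairs (diff_pairs L r y))"
      unfolding forest_pairs_flip[OF ih(1)] ih(3) ..
    also have "\<dots> = diff_pairs L r x"
      by (rule diff_pairs_immpred[OF wo succ, symmetric])
    finally show ?thesis
      using two_labelled_treq[OF tr two_labelled_p0_one[OF two_labelled_flip]]
        treq_fst[OF tr] tree_wf_p0_one ih(2) by simp
  next
    case limit
    then obtain f where f: "\<forall>i. wlt r (f i) x \<and> is_odd_el r (f i) \<and> wlt r (f i) (f (Suc i))"
      and cof: "\<forall>y. wlt r y x \<longrightarrow> (\<exists>i. wlt r y (f i))"
      and tr: "treq (t x) (p0_seq (\<lambda>i. flip (t (f i))))" using T by blast
    have ih: "two_labelled (t (f i))" "tree_wf (fst (t (f i)))"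
      "forest_pairs L (t (f i)) = diff_pairs L r (f i)" for i
      using IH f by blast+
    have "forest_pairs L (t x) = forest_pairs L (p0_seq (\<lambda>i. flip (t (f i))))"
      by (rule forest_pairs_treq[OF tr])
    also have "\<dots> = p0_seq_pairs L (\<lambda>i. forest_pairs L (flip (t (f i))))"
      using ih(2) by (intro forest_pairs_p0_seq) simp
    also have "\<dots> = p0_seq_pairs L (\<lambda>i. flip_pairs (diff_pairs L r (f i)))"
      unfolding forest_pairs_flip[OF ih(1)] ih(3) ..
    also have "\<dots> = diff_pairs L r x"
      using f cof by (intro diff_pairs_limit[OF base wo rpar_limit[OF wo limit], symmetric])
        (auto simp: rpar_def)
    finally show ?thesis
      using two_labelled_treq[OF tr two_labelled_p0_seq[OF two_labelled_flip]]
        treq_fst[OF tr] tree_wf_p0_seq ih(2) by simp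
  qed
qed

lemma all_less_two: "(\<forall>i<(2::nat). P i) \<longleftrightarrow> P 0 \<and> P 1"
  by (auto simp: less_2_cases_iff)

lemma PiE_two_iff: "A \<in> X \<rightarrow>\<^sub>E {..<2::nat} \<longleftrightarrow> (\<exists>S \<subseteq> X. A = (\<lambda>x\<in>X. if x \<in> S then 1 else 0))"
proof
  assume A: "A \<in> X \<rightarrow>\<^sub>E {..<2}"
  have "A = (\<lambda>x\<in>X. if x \<in> {x \<in> X. A x = 1} then 1 else 0)"
  proof
    fix x show "A x = (\<lambda>x\<in>X. if x \<in> {x \<in> X. A x = 1} then 1 else 0) x"
      using A by (cases "x \<in> X") (auto simp: PiE_def extensional_def Pi_def less_2_cases_iff)
  qed
  then show "\<exists>S \<subseteq> X. A = (\<lambda>x\<in>X. if x \<in> S then 1 else 0)"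
    by (intro exI[of _ "{x \<in> X. A x = 1}"]) auto
qed (auto simp: PiE_iff)

lemma Lforest_eq_forest_pairs:
  fixes L :: "'x set set"
  assumes "two_labelled T"
  shows "Lforest 2 X L (fst T) tle (snd T)
           = (\<lambda>S. \<lambda>x\<in>X. if x \<in> S then 1 else 0) ` {S. (S, X) \<in> forest_pairs L T}"
proof -
  let ?chi = "\<lambda>S. \<lambda>x\<in>X. if x \<in> S then (1::nat) else 0"
  let ?R = "\<lambda>B i. \<Union>p \<in> {p \<in> fst T. snd T p = i}. region (fst T) B p"
  let ?others = "\<lambda>B. \<Union>p \<in> {p \<in> fst T. snd T p \<noteq> 1}. region (fst T) B p"
  have zero: "{p \<in> fst T. snd T p = 0} = {p \<in> fst T. snd T p \<noteq> 1}"
    using assms unfolding two_labelled_def by force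
  have parts: "(\<forall>i<2. {x \<in> X. ?chi S x = i} = ?R B i) \<longleftrightarrow> X - S = ?others B \<and> S = ?R B 1"
    if "S \<subseteq> X" for S and B :: "nat list \<Rightarrow> 'x set"
  proof -
    have "{x \<in> X. ?chi S x = 0} = X - S" "{x \<in> X. ?chi S x = 1} = S" using that by auto
    then show ?thesis unfolding all_less_two using zero by simp
  qed
  have "A \<in> Lforest 2 X L (fst T) tle (snd T) \<longleftrightarrow> A \<in> X \<rightarrow>\<^sub>E {..<2} \<and>
      (\<exists>B. (\<forall>p \<in> fst T. B p \<in> L) \<and> (\<Union>p \<in> fst T. B p) = X \<and> (\<forall>i<2. {x \<in> X. A x = i} = ?R B i))"
    for A unfolding Lforest_def region_def by simp
  also have "\<dots> A \<longleftrightarrow> (\<exists>S \<subseteq> X. A = ?chi S \<and> (S, X) \<in> forest_pairs L T)" for A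
  proof
    assume "A \<in> X \<rightarrow>\<^sub>E {..<2} \<and>
      (\<exists>B. (\<forall>p \<in> fst T. B p \<in> L) \<and> (\<Union>p \<in> fst T. B p) = X \<and> (\<forall>i<2. {x \<in> X. A x = i} = ?R B i))"
    then obtain S B where S: "S \<subseteq> X" "A = ?chi S" and B: "\<forall>p \<in> fst T. B p \<in> L"
      "(\<Union>p \<in> fst T. B p) = X" "\<forall>i<2. {x \<in> X. ?chi S x = i} = ?R B i"
      unfolding PiE_two_iff by blast
    then have "(S, X) \<in> forest_pairs L T"
      unfolding mem_forest_pairs_iff parts[OF S(1)] by auto
    then show "\<exists>S \<subseteq> X. A = ?chi S \<and> (S, X) \<in> forest_pairs L T" using S by blast
  next
    assume "\<exists>S \<subseteq> X. A = ?chi S \<and> (S, X) \<in> forest_pairs L T"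
    then obtain S B where S: "S \<subseteq> X" "A = ?chi S" and B: "\<forall>p \<in> fst T. B p \<in> L"
      "X = (\<Union>p \<in> fst T. B p)" "S = ?R B 1" "X - S = ?others B"
      unfolding mem_forest_pairs_iff by blast
    then have "\<forall>i<2. {x \<in> X. A x = i} = ?R B i" using parts[OF S(1)] by simp
    moreover have "A \<in> X \<rightarrow>\<^sub>E {..<2}" unfolding S(2) by auto
    ultimately show "A \<in> X \<rightarrow>\<^sub>E {..<2} \<and>
      (\<exists>B. (\<forall>p \<in> fst T. B p \<in> L) \<and> (\<Union>p \<in> fst T. B p) = X \<and> (\<forall>i<2. {x \<in> X. A x = i} = ?R B i))"
      using B(1) B(2)[symmetric] by blast
  qed
  also have "\<dots> A \<longleftrightarrow> A \<in> ?chi ` {S. (S, X) \<in> forest_pairs L T}" for A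
    using forest_pairs_subset[of _ X L T] by (auto simp: image_iff)
  finally show ?thesis by blast
qed

theorem proposition4p10:
  fixes X :: "'x set" and L :: "'x set set"
    and r :: "('a \<times> 'a) set" and t :: "'a \<Rightarrow> ltree" and x0 :: 'a
  assumes "is_base X L"
    and "Well_order r" and "countable (Field r)"
    and "Tfam r t"
    and "x0 \<in> Field r"
  shows "Lforest 2 X L (fst (t x0)) tle (snd (t x0))
           = (\<lambda>A. \<lambda>x\<in>X. if x \<in> A then 1 else 0) ` Dclass L r x0"
proof -
  have "two_labelled (t x0)" and pairs: "forest_pairs L (t x0) = diff_pairs L r x0"
    using forest_pairs_eq_diff_pairs[OF assms(1,2,4,5)] by blast+
  have "Lforest 2 X L (fst (t x0)) tle (snd (t x0))
      = (\<lambda>S. \<lambda>x\<in>X. if x \<in> S then 1 else 0) ` {S. (S, X) \<in> forest_pairs L (t x0)}"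
    using \<open>two_labelled (t x0)\<close> by (rule Lforest_eq_forest_pairs)
  also have "{S. (S, X) \<in> forest_pairs L (t x0)} = Dclass L r x0"
    unfolding pairs Dclass_eq_diff_pairs[OF assms(1,2,5)] ..
  finally show ?thesis .
qed

end
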